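(* Let $P$ be a finite set of points in $\mathbb{R}^m$, let $(A,B)$ be an optimal 2-means partition of $P$, and let $S\subseteq A$ be the set of low-revenue points of $A$. Then for any $u,v\in S$, $d(u,v)\le\frac29\max\{d(u,\rho(A)),d(v,\rho(A))\}$.
   Context: Distances are Euclidean: $d(x,y)=\|x-y\|_2$. For finite nonempty $S$, $\rho(S)=\frac{1}{|S|}\sum_{u\in S}u$ and $\Delta_1(S)=\sum_{u\in S}d(u,\rho(S))^2$. A partition $(A,B)$ of $P$ into two nonempty sets is an optimal 2-means partition if it minimizes $\Delta_1(A)+\Delta_1(B)$ among all partitions of $P$ into two nonempty sets. For $i\in A$, $j\in B$, $rev(i,j)=\min\{d(i,j)/\max\{d(i,\rho(A)),d(j,\rho(B))\},\,1\}$ (equal to $1$ if the maximum is $0$). For $u\in A$, $HR_B(u)=\{v\in B: rev(u,v)\ge\frac{1}{10}\}$ and $LR_B(u)=B\setminus HR_B(u)$. A point $u\in A$ is a high-revenue point if $|HR_B(u)|\ge\frac12|B|$, and a low-revenue point otherwise. *)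

theory Defs
  imports "HOL-Analysis.Analysis"
begin

definition centroid :: "(real^'m) set \<Rightarrow> real^'m" where
  "centroid S = (1 / real (card S)) *\<^sub>R (\<Sum>u\<in>S. u)"

definition cost1 :: "(real^'m) set \<Rightarrow> real" where
  "cost1 S = (\<Sum>u\<in>S. (dist u (centroid S))\<^sup>2)"

definition opt_2means :: "(real^'m) set \<Rightarrow> (real^'m) set \<Rightarrow> (real^'m) set \<Rightarrow> bool" where
  "opt_2means P A B \<longleftrightarrow>
     A \<noteq> {} \<and> B \<noteq> {} \<and> A \<inter> B = {} \<and> A \<union> B = P \<and>
     (\<forall>A' B'. A' \<noteq> {} \<longrightarrow> B' \<noteq> {} \<longrightarrow> A' \<inter> B' = {} \<longrightarrow> A' \<union> B' = P \<longrightarrow>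
        cost1 A + cost1 B \<le> cost1 A' + cost1 B')"

definition rev :: "(real^'m) set \<Rightarrow> (real^'m) set \<Rightarrow> real^'m \<Rightarrow> real^'m \<Rightarrow> real" where
  "rev A B i j =
     (let M = max (dist i (centroid A)) (dist j (centroid B))
      in if M = 0 then 1 else min (dist i j / M) 1)"

definition HR :: "(real^'m) set \<Rightarrow> (real^'m) set \<Rightarrow> real^'m \<Rightarrow> (real^'m) set" where
  "HR A B u = {v \<in> B. rev A B u v \<ge> 1/10}"

definition LR :: "(real^'m) set \<Rightarrow> (real^'m) set \<Rightarrow> real^'m \<Rightarrow> (real^'m) set" where
  "LR A B u = B - HR A B u"

definition high_revenue :: "(real^'m) set \<Rightarrow> (real^'m) set \<Rightarrow> real^'m \<Rightarrow> bool" where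
  "high_revenue A B u \<longleftrightarrow> real (card (HR A B u)) \<ge> real (card B) / 2"

definition low_revenue_points :: "(real^'m) set \<Rightarrow> (real^'m) set \<Rightarrow> (real^'m) set" where
  "low_revenue_points A B = {u \<in> A. \<not> high_revenue A B u}"

end

theory Submission
  imports Defs
begin

text \<open>Since \<open>u\<close> and \<open>v\<close> are both low-revenue, each of them has revenue at least \<open>1/10\<close> with
  fewer than half of the points of \<open>B\<close>, so some \<open>w \<in> B\<close> has revenue below \<open>1/10\<close> with both.
  Optimality of the partition gives \<open>d(w, \<rho>(B)) \<le> d(w, \<rho>(A))\<close>: otherwise moving \<open>w\<close> from \<open>B\<close>
  to \<open>A\<close> would lower the cost. Hence low revenue forces \<open>d(u, w) \<le> d(u, \<rho>(A)) / 9\<close>, likewise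
  for \<open>v\<close>, and the triangle inequality through \<open>w\<close> gives the bound \<open>2/9\<close>.\<close>

lemma cost1_le_sum_dist:
  fixes S :: "(real^'m) set"
  assumes "finite S" "S \<noteq> {}"
  shows "cost1 S \<le> (\<Sum>x\<in>S. (dist x c)\<^sup>2)"
proof -
  define r where "r = centroid S"
  have "(\<Sum>x\<in>S. x - r) = (\<Sum>x\<in>S. x) - real (card S) *\<^sub>R r"
    by (simp add: sum_subtractf scaleR_conv_of_real)
  also have "\<dots> = 0"
    using assms by (simp add: r_def centroid_def)
  finally have cross: "(\<Sum>x\<in>S. (x - r) \<bullet> (r - c)) = 0"
    by (simp add: inner_sum_left [symmetric])
  have "(dist x c)\<^sup>2 = (dist x r)\<^sup>2 + (norm (r - c))\<^sup>2 + 2 * ((x - r) \<bullet> (r - c))" for x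
    using dot_norm [of "x - r" "r - c"] by (simp add: dist_norm)
  then have "(dist x r)\<^sup>2 + 2 * ((x - r) \<bullet> (r - c)) \<le> (dist x c)\<^sup>2" for x
    by (simp add: add.commute add.left_commute)
  then have "(\<Sum>x\<in>S. (dist x r)\<^sup>2 + 2 * ((x - r) \<bullet> (r - c))) \<le> (\<Sum>x\<in>S. (dist x c)\<^sup>2)"
    by (rule sum_mono)
  then show ?thesis
    by (simp add: cost1_def sum.distrib cross flip: r_def sum_distrib_left)
qed

lemma cost1_insert_le:
  fixes A :: "(real^'m) set"
  assumes "finite A"
  shows "cost1 (insert w A) \<le> cost1 A + (dist w (centroid A))\<^sup>2"
proof -
  have "cost1 (insert w A) \<le> (\<Sum>x\<in>insert w A. (dist x (centroid A))\<^sup>2)"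
    using assms by (intro cost1_le_sum_dist) auto
  also have "\<dots> \<le> cost1 A + (dist w (centroid A))\<^sup>2"
    using assms by (simp add: cost1_def sum.insert_if)
  finally show ?thesis .
qed

lemma cost1_remove_le:
  fixes B :: "(real^'m) set"
  assumes "finite B" "w \<in> B"
  shows "cost1 (B - {w}) + (dist w (centroid B))\<^sup>2 \<le> cost1 B"
proof (cases "B - {w} = {}")
  case True
  with assms(2) have "B = {w}"
    by blast
  then show ?thesis
    by (simp add: cost1_def)
next
  case False
  then have "cost1 (B - {w}) \<le> (\<Sum>x\<in>B - {w}. (dist x (centroid B))\<^sup>2)"
    using assms by (intro cost1_le_sum_dist) auto
  then show ?thesis
    using assms by (simp add: cost1_def sum.remove)
qed

lemma opt_2means_dist_own_centroid_le:
  fixes P A B :: "(real^'m) set"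
  assumes "finite P" "opt_2means P A B" "w \<in> B"
  shows "dist w (centroid B) \<le> dist w (centroid A)"
proof (cases "B = {w}")
  case True
  then show ?thesis
    by (simp add: centroid_def)
next
  case False
  have part: "A \<noteq> {}" "A \<inter> B = {}" "A \<union> B = P"
    and opt: "\<And>A' B'. A' \<noteq> {} \<Longrightarrow> B' \<noteq> {} \<Longrightarrow> A' \<inter> B' = {} \<Longrightarrow> A' \<union> B' = P \<Longrightarrow>
        cost1 A + cost1 B \<le> cost1 A' + cost1 B'"
    using assms(2) unfolding opt_2means_def by blast+
  have "finite A" "finite B"
    using part assms(1) by auto
  have "cost1 A + cost1 B \<le> cost1 (insert w A) + cost1 (B - {w})"
    using False part assms(3) by (intro opt) auto
  then have "(dist w (centroid B))\<^sup>2 \<le> (dist w (centroid A))\<^sup>2"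
    using cost1_insert_le [OF \<open>finite A\<close>, of w] cost1_remove_le [OF \<open>finite B\<close> assms(3)]
    by linarith
  then show ?thesis
    by (rule power2_le_imp_le) simp
qed

lemma dist_le_of_rev_lt:
  fixes A B :: "(real^'m) set"
  assumes "rev A B u w < 1/10" "dist w (centroid B) \<le> dist w (centroid A)"
  shows "dist u w \<le> dist u (centroid A) / 9"
proof -
  define M where "M = max (dist u (centroid A)) (dist w (centroid B))"
  have "M \<noteq> 0" "dist u w / M < 1/10"
    using assms(1) unfolding rev_def M_def [symmetric] Let_def by (auto split: if_splits)
  moreover have "M \<ge> 0"
    unfolding M_def by (simp add: le_max_iff_disj)
  ultimately have close: "dist u w < M / 10"
    by (simp add: field_simps)
  show ?thesis
  proof (cases "dist w (centroid B) \<le> dist u (centroid A)")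
    case True
    then have "M = dist u (centroid A)"
      by (simp add: M_def)
    with close zero_le_dist [of u w] show ?thesis
      by linarith
  next
    case False
    have "dist w (centroid A) \<le> dist u w + dist u (centroid A)"
      by (metis dist_commute dist_triangle)
    then show ?thesis
      using False close assms(2) by (simp add: M_def)
  qed
qed

lemma low_revenue_common_LR:
  fixes A B :: "(real^'m) set"
  assumes "finite B" "u \<in> low_revenue_points A B" "v \<in> low_revenue_points A B"
  obtains w where "w \<in> LR A B u" "w \<in> LR A B v"
proof -
  have "card (HR A B u \<union> HR A B v) \<le> card (HR A B u) + card (HR A B v)"
    by (rule card_Un_le)
  also have "\<dots> < card B"
    using assms(2,3) unfolding low_revenue_points_def high_revenue_def by auto
  finally have "card (HR A B u \<union> HR A B v) < card B" .
  moreover have "finite (HR A B u \<union> HR A B v)"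
    using assms(1) unfolding HR_def by simp
  ultimately have "\<not> B \<subseteq> HR A B u \<union> HR A B v"
    by (meson card_mono leD)
  then show ?thesis
    using that unfolding LR_def by blast
qed

theorem mainTheorem5:
  fixes P A B :: "(real^'m) set"
  assumes "finite P"
    and "opt_2means P A B"
    and "u \<in> low_revenue_points A B"
    and "v \<in> low_revenue_points A B"
  shows "dist u v \<le> 2/9 * max (dist u (centroid A)) (dist v (centroid A))"
proof -
  have "finite B"
    using assms(1,2) unfolding opt_2means_def by auto
  then obtain w where w: "w \<in> LR A B u" "w \<in> LR A B v"
    using assms(3,4) by (rule low_revenue_common_LR)
  then have "w \<in> B" "rev A B u w < 1/10" "rev A B v w < 1/10"
    unfolding LR_def HR_def by auto
  moreover from \<open>w \<in> B\<close> have "dist w (centroid B) \<le> dist w (centroid A)"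
    by (rule opt_2means_dist_own_centroid_le [OF assms(1,2)])
  ultimately have "dist u w \<le> dist u (centroid A) / 9" "dist v w \<le> dist v (centroid A) / 9"
    by (blast intro: dist_le_of_rev_lt)+
  moreover have "dist u v \<le> dist u w + dist v w"
    by (rule dist_triangle2)
  ultimately show ?thesis
    by (auto simp: max_def)
qed

end
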